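(* Let $\mathcal G=(V,E)$ be a finite connected undirected graph with strictly positive edge weights, let $d$ denote the weighted shortest-path distance, and let $\mathcal O\subseteq V$. Suppose that for every $u\in V$ there exist $o_1,o_2\in\mathcal O$ such that there is a unique shortest path $\mathcal P(o_1,o_2)$ between $o_1$ and $o_2$ and $u$ lies on $\mathcal P(o_1,o_2)$. Then $\mathcal O$ is a double resolving set of $\mathcal G$, i.e., for any two distinct nodes $x,y\in V$ there exist $u,v\in\mathcal O$ such that $d(x,u)-d(x,v)\neq d(y,u)-d(y,v)$.
   Context: A set $S\subseteq V$ is a double resolving set (DRS) of $\mathcal G$ if for any two distinct $x,y\in V$ there exist $u,v\in S$ with $d(x,u)-d(x,v)\ne d(y,u)-d(y,v)$. *)

theory Defs
  imports Complex_Main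
begin

definition weighted_graph :: "'a set \<Rightarrow> ('a \<Rightarrow> 'a \<Rightarrow> bool) \<Rightarrow> ('a \<Rightarrow> 'a \<Rightarrow> real) \<Rightarrow> bool" where
  "weighted_graph V E w \<longleftrightarrow> finite V
     \<and> (\<forall>x y. E x y \<longrightarrow> x \<in> V \<and> y \<in> V)
     \<and> (\<forall>x y. E x y \<longrightarrow> E y x)
     \<and> (\<forall>x. \<not> E x x)
     \<and> (\<forall>x y. E x y \<longrightarrow> w x y = w y x \<and> w x y > 0)"

definition is_path :: "'a set \<Rightarrow> ('a \<Rightarrow> 'a \<Rightarrow> bool) \<Rightarrow> 'a list \<Rightarrow> bool" where
  "is_path V E p \<longleftrightarrow> p \<noteq> [] \<and> set p \<subseteq> V \<and> (\<forall>i. Suc i < length p \<longrightarrow> E (p ! i) (p ! Suc i))"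

definition path_between :: "'a set \<Rightarrow> ('a \<Rightarrow> 'a \<Rightarrow> bool) \<Rightarrow> 'a \<Rightarrow> 'a \<Rightarrow> 'a list \<Rightarrow> bool" where
  "path_between V E x y p \<longleftrightarrow> is_path V E p \<and> hd p = x \<and> last p = y"

definition path_weight :: "('a \<Rightarrow> 'a \<Rightarrow> real) \<Rightarrow> 'a list \<Rightarrow> real" where
  "path_weight w p = (\<Sum>i<length p - 1. w (p ! i) (p ! Suc i))"

definition connected_graph :: "'a set \<Rightarrow> ('a \<Rightarrow> 'a \<Rightarrow> bool) \<Rightarrow> bool" where
  "connected_graph V E \<longleftrightarrow> (\<forall>x\<in>V. \<forall>y\<in>V. \<exists>p. path_between V E x y p)"

definition gdist :: "'a set \<Rightarrow> ('a \<Rightarrow> 'a \<Rightarrow> bool) \<Rightarrow> ('a \<Rightarrow> 'a \<Rightarrow> real) \<Rightarrow> 'a \<Rightarrow> 'a \<Rightarrow> real" where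
  "gdist V E w x y = Inf (path_weight w ` {p. path_between V E x y p})"

definition shortest_path :: "'a set \<Rightarrow> ('a \<Rightarrow> 'a \<Rightarrow> bool) \<Rightarrow> ('a \<Rightarrow> 'a \<Rightarrow> real) \<Rightarrow> 'a \<Rightarrow> 'a \<Rightarrow> 'a list \<Rightarrow> bool" where
  "shortest_path V E w x y p \<longleftrightarrow> path_between V E x y p \<and> path_weight w p = gdist V E w x y"

definition double_resolving_set :: "'a set \<Rightarrow> ('a \<Rightarrow> 'a \<Rightarrow> bool) \<Rightarrow> ('a \<Rightarrow> 'a \<Rightarrow> real) \<Rightarrow> 'a set \<Rightarrow> bool" where
  "double_resolving_set V E w S \<longleftrightarrow> S \<subseteq> V \<and>
     (\<forall>x\<in>V. \<forall>y\<in>V. x \<noteq> y \<longrightarrow> (\<exists>u\<in>S. \<exists>v\<in>S.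
        gdist V E w x u - gdist V E w x v \<noteq> gdist V E w y u - gdist V E w y v))"

end

theory Submission
  imports Defs
begin

text \<open>If x and y are not doubly resolved, d(x,u) - d(y,u) = c is the same for all
observers u. Take observers o1, o2 all of whose shortest paths pass through x. Then
d(o1,o2) = d(o1,x) + d(x,o2) = d(o1,y) + d(y,o2) + 2c \<ge> d(o1,o2) + 2c, so c \<le> 0; the
observers for y give c \<ge> 0. With c = 0, y lies on a shortest o1-o2 path, which then also
contains x at the same distance from o1; positive edge weights force x = y.\<close>

lemma path_weight_Nil [simp]: "path_weight w [] = 0"
  and path_weight_singleton [simp]: "path_weight w [a] = 0"
  by (simp_all add: path_weight_def)

lemma path_weight_Cons_Cons [simp]: "path_weight w (a # b # p) = w a b + path_weight w (b # p)"
  unfolding path_weight_def by (simp add: sum.lessThan_Suc_shift del: sum.lessThan_Suc)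

lemma is_path_singleton [simp]: "is_path V E [a] \<longleftrightarrow> a \<in> V"
  by (simp add: is_path_def)

lemma is_path_Cons_Cons [simp]:
  "is_path V E (a # b # p) \<longleftrightarrow> a \<in> V \<and> E a b \<and> is_path V E (b # p)"
  unfolding is_path_def by (auto simp: nth_Cons split: nat.splits)

lemma path_weight_append:
  "xs \<noteq> [] \<Longrightarrow> ys \<noteq> [] \<Longrightarrow>
   path_weight w (xs @ ys) = path_weight w xs + w (last xs) (hd ys) + path_weight w ys"
  by (induction xs rule: induct_list012) (auto simp: neq_Nil_conv)

lemma is_path_append:
  "xs \<noteq> [] \<Longrightarrow> ys \<noteq> [] \<Longrightarrow>
   is_path V E (xs @ ys) \<longleftrightarrow> is_path V E xs \<and> E (last xs) (hd ys) \<and> is_path V E ys"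
  by (induction xs rule: induct_list012) (auto simp: neq_Nil_conv)

lemma path_between_append:
  assumes A: "path_between V E x y A" and B: "path_between V E y z B"
  shows "path_between V E x z (A @ tl B)"
    and "path_weight w (A @ tl B) = path_weight w A + path_weight w B"
proof -
  obtain B' where B_eq: "B = y # B'"
    using B by (cases B) (auto simp: path_between_def is_path_def)
  have "A \<noteq> []" "last A = y" using A by (auto simp: path_between_def is_path_def)
  then show "path_between V E x z (A @ tl B)"
    and "path_weight w (A @ tl B) = path_weight w A + path_weight w B"
    using A B unfolding B_eq path_between_def
    by (cases B'; auto simp: is_path_append path_weight_append)+
qed

lemma path_between_split:
  assumes "path_between V E x z P" "y \<in> set P"
  shows "\<exists>A B. P = A @ tl B \<and> path_between V E x y A \<and> path_between V E y z B"
  using assms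
proof (induction P arbitrary: x)
  case Nil
  then show ?case by simp
next
  case (Cons a P)
  then have "a = x" "x \<in> V" by (auto simp: path_between_def is_path_def)
  show ?case
  proof (cases "a = y")
    case True
    then have "a # P = [y] @ tl (a # P)" "path_between V E x y [y]" "path_between V E y z (a # P)"
      using Cons.prems \<open>a = x\<close> \<open>x \<in> V\<close> by (simp_all add: path_between_def)
    then show ?thesis by blast
  next
    case False
    with Cons.prems obtain b P' where P: "P = b # P'" by (cases P) auto
    with Cons.prems \<open>a = x\<close> have "E x b" "path_between V E b z P"
      by (auto simp: path_between_def)
    moreover have "y \<in> set P" using Cons.prems False by simp
    ultimately obtain A B
      where "P = A @ tl B" "path_between V E b y A" "path_between V E y z B"
      using Cons.IH by blast
    moreover from this(2) obtain A' where "A = b # A'"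
      by (cases A) (auto simp: path_between_def is_path_def)
    with \<open>path_between V E b y A\<close> \<open>x \<in> V\<close> \<open>E x b\<close> have "path_between V E x y (x # A)"
      by (simp add: path_between_def)
    ultimately show ?thesis using \<open>a = x\<close> by (metis append_Cons)
  qed
qed

lemma is_path_rev:
  assumes "weighted_graph V E w" "is_path V E p"
  shows "is_path V E (rev p)" and "path_weight w (rev p) = path_weight w p"
proof -
  have "is_path V E (rev p) \<and> path_weight w (rev p) = path_weight w p"
    using assms(2)
  proof (induction p rule: induct_list012)
    case (3 x y zs)
    then have "E y x" "w y x = w x y" using assms(1) by (auto simp: weighted_graph_def)
    with 3 show ?case
      using path_weight_append[of "rev (y # zs)" "[x]" w] is_path_append[of "rev (y # zs)" "[x]" V E]
      by simp
  qed simp_all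
  then show "is_path V E (rev p)" and "path_weight w (rev p) = path_weight w p" by auto
qed

lemma gdist_commute:
  assumes "weighted_graph V E w"
  shows "gdist V E w x y = gdist V E w y x"
proof -
  have "path_weight w ` {p. path_between V E x y p} \<subseteq> path_weight w ` {p. path_between V E y x p}"
    for x y
  proof
    fix r assume "r \<in> path_weight w ` {p. path_between V E x y p}"
    then obtain p where p: "path_between V E x y p" "r = path_weight w p" by auto
    then have "path_between V E y x (rev p)" "r = path_weight w (rev p)"
      using is_path_rev[OF assms] by (auto simp: path_between_def hd_rev last_rev)
    then show "r \<in> path_weight w ` {p. path_between V E y x p}" by blast
  qed
  then show ?thesis unfolding gdist_def by (metis subset_antisym)
qed

lemma path_weight_ge_length:
  assumes "is_path V E p" "\<And>a b. E a b \<Longrightarrow> \<delta> \<le> w a b"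
  shows "real (length p - 1) * \<delta> \<le> path_weight w p"
proof -
  have "(\<Sum>i<length p - 1. \<delta>) \<le> (\<Sum>i<length p - 1. w (p ! i) (p ! Suc i))"
    using assms by (intro sum_mono) (auto simp: is_path_def)
  then show ?thesis by (simp add: path_weight_def)
qed

lemma path_weight_nonneg:
  assumes "weighted_graph V E w" "is_path V E p"
  shows "0 \<le> path_weight w p"
  using path_weight_ge_length[OF assms(2), of 0 w] assms(1)
  by (force simp: weighted_graph_def)

lemma gdist_le_path_weight:
  assumes "weighted_graph V E w" "path_between V E x y p"
  shows "gdist V E w x y \<le> path_weight w p"
  unfolding gdist_def
proof (rule cInf_lower)
  show "path_weight w p \<in> path_weight w ` {p. path_between V E x y p}"
    using assms(2) by blast
  show "bdd_below (path_weight w ` {p. path_between V E x y p})"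
    using path_weight_nonneg[OF assms(1)] by (auto simp: path_between_def bdd_below_def)
qed

lemma edge_weight_lower_bound:
  assumes "weighted_graph V E w"
  obtains \<delta> where "\<delta> > 0" "\<And>a b. E a b \<Longrightarrow> \<delta> \<le> w a b"
proof
  let ?W = "{w a b | a b. E a b}"
  have "?W \<subseteq> case_prod w ` (V \<times> V)" using assms by (auto simp: weighted_graph_def)
  moreover have "finite V" using assms by (simp add: weighted_graph_def)
  ultimately have "finite ?W" by (meson finite_SigmaI finite_imageI finite_subset)
  then show "Min (insert 1 ?W) > 0" using assms by (auto simp: weighted_graph_def)
  show "Min (insert 1 ?W) \<le> w a b" if "E a b" for a b
    using \<open>finite ?W\<close> that by (intro Min_le) auto
qed

lemma shortest_path_exists:
  assumes wg: "weighted_graph V E w" and p0: "path_between V E x y p0"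
  obtains p where "shortest_path V E w x y p"
proof -
  obtain \<delta> where \<delta>: "\<delta> > 0" "\<And>a b. E a b \<Longrightarrow> \<delta> \<le> w a b"
    using edge_weight_lower_bound[OF wg] by blast
  \<comment> \<open>a path with more than N vertices weighs more than p0, so only finitely many paths compete\<close>
  define N where "N = nat \<lceil>path_weight w p0 / \<delta>\<rceil> + length p0"
  define T where "T = {p. path_between V E x y p \<and> length p \<le> N}"
  have "T \<subseteq> {xs. set xs \<subseteq> V \<and> length xs \<le> N}"
    by (auto simp: T_def path_between_def is_path_def)
  with wg have "finite T" by (auto simp: weighted_graph_def intro: finite_subset finite_lists_length_le)
  moreover have "p0 \<in> T" using p0 by (simp add: T_def N_def)
  ultimately obtain pm where pm: "pm \<in> T" "\<And>p. p \<in> T \<Longrightarrow> path_weight w pm \<le> path_weight w p"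
    using ex_is_arg_min_if_finite[of T "path_weight w"] by (auto simp: is_arg_min_linorder)
  have "path_weight w pm \<le> path_weight w p" if p: "path_between V E x y p" for p
  proof (cases "length p \<le> N")
    case True
    with p show ?thesis by (intro pm(2)) (simp add: T_def)
  next
    case False
    have "path_weight w pm \<le> path_weight w p0" using pm(2) \<open>p0 \<in> T\<close> .
    also have "\<dots> \<le> real N * \<delta>"
    proof -
      have "path_weight w p0 / \<delta> \<le> real N" unfolding N_def by linarith
      with \<delta>(1) show ?thesis by (simp add: divide_le_eq)
    qed
    also have "\<dots> \<le> real (length p - 1) * \<delta>" using False \<delta>(1) by simp
    also have "\<dots> \<le> path_weight w p"
      using path_weight_ge_length[of V E p \<delta> w] p \<delta>(2) by (simp add: path_between_def)
    finally show ?thesis .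
  qed
  with pm(1) have "gdist V E w x y = path_weight w pm"
    unfolding gdist_def T_def by (intro cInf_eq_minimum) auto
  with pm(1) show ?thesis by (intro that[of pm]) (simp add: shortest_path_def T_def)
qed

lemma path_weight_take:
  "k < length p \<Longrightarrow> path_weight w (take (Suc k) p) = (\<Sum>i<k. w (p ! i) (p ! Suc i))"
  unfolding path_weight_def by (intro sum.cong) auto

lemma path_weight_take_strict_mono:
  assumes "weighted_graph V E w" "is_path V E p"
  shows "strict_mono_on {..<length p} (\<lambda>k. path_weight w (take (Suc k) p))"
proof (rule strict_mono_onI)
  fix i j assume ij: "i \<in> {..<length p}" "j \<in> {..<length p}" "i < j"
  have "0 < (\<Sum>k\<in>{i..<j}. w (p ! k) (p ! Suc k))"
    using ij assms by (intro sum_pos) (auto simp: is_path_def weighted_graph_def)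
  moreover have "(\<Sum>k<j. w (p ! k) (p ! Suc k))
      = (\<Sum>k<i. w (p ! k) (p ! Suc k)) + (\<Sum>k\<in>{i..<j}. w (p ! k) (p ! Suc k))"
    using \<open>i < j\<close> by (simp add: lessThan_atLeast0 sum.atLeastLessThan_concat)
  ultimately show "path_weight w (take (Suc i) p) < path_weight w (take (Suc j) p)"
    using ij by (simp add: path_weight_take)
qed

lemma path_prefix_eq_if_path_weight_eq:
  assumes "weighted_graph V E w" "is_path V E P"
    and "P = A @ A'" "P = C @ C'" "A \<noteq> []" "C \<noteq> []"
    and "path_weight w A = path_weight w C"
  shows "A = C"
proof -
  have A: "A = take (Suc (length A - 1)) P" "length A - 1 \<in> {..<length P}"
    using assms(3,5) by (auto simp: Suc_le_eq neq_Nil_conv)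
  have C: "C = take (Suc (length C - 1)) P" "length C - 1 \<in> {..<length P}"
    using assms(4,6) by (auto simp: Suc_le_eq neq_Nil_conv)
  have "length A - 1 = length C - 1"
    using inj_onD[OF strict_mono_on_imp_inj_on[OF path_weight_take_strict_mono[OF assms(1,2)]]]
      A C assms(7) by metis
  with A C show ?thesis by metis
qed

lemma shortest_path_exists_if_connected:
  assumes "weighted_graph V E w" "connected_graph V E" "x \<in> V" "y \<in> V"
  obtains p where "shortest_path V E w x y p"
  using assms(2-4) shortest_path_exists[OF assms(1)] unfolding connected_graph_def by blast

lemma gdist_triangle:
  assumes "weighted_graph V E w" "connected_graph V E" "x \<in> V" "y \<in> V" "z \<in> V"
  shows "gdist V E w x z \<le> gdist V E w x y + gdist V E w y z"
proof -
  obtain A B where A: "shortest_path V E w x y A" and B: "shortest_path V E w y z B"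
    using shortest_path_exists_if_connected assms by metis
  then have AB: "path_between V E x y A" "path_between V E y z B"
    by (simp_all add: shortest_path_def)
  have "gdist V E w x z \<le> path_weight w (A @ tl B)"
    using gdist_le_path_weight[OF assms(1) path_between_append(1)[OF AB]] .
  also have "\<dots> = gdist V E w x y + gdist V E w y z"
    using path_between_append(2)[OF AB] A B by (simp add: shortest_path_def)
  finally show ?thesis .
qed

lemma shortest_path_split_path_weight:
  assumes wg: "weighted_graph V E w" and P: "shortest_path V E w x z P"
    and split: "P = A @ tl B" "path_between V E x y A" "path_between V E y z B"
  shows "path_weight w A = gdist V E w x y" and "path_weight w B = gdist V E w y z"
proof -
  obtain A' B' where A': "shortest_path V E w x y A'" and B': "shortest_path V E w y z B'"
    using shortest_path_exists[OF wg] split(2,3) by metis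
  then have A'B': "path_between V E x y A'" "path_between V E y z B'"
    by (simp_all add: shortest_path_def)
  have "path_weight w A + path_weight w B = gdist V E w x z"
    using P split(1) path_between_append(2)[OF split(2,3)] by (simp add: shortest_path_def)
  moreover have "gdist V E w x z \<le> gdist V E w x y + path_weight w B"
    using gdist_le_path_weight[OF wg path_between_append(1)[OF A'B'(1) split(3)]]
      path_between_append(2)[OF A'B'(1) split(3)] A' by (simp add: shortest_path_def)
  moreover have "gdist V E w x z \<le> path_weight w A + gdist V E w y z"
    using gdist_le_path_weight[OF wg path_between_append(1)[OF split(2) A'B'(2)]]
      path_between_append(2)[OF split(2) A'B'(2)] B' by (simp add: shortest_path_def)
  moreover have "gdist V E w x y \<le> path_weight w A" "gdist V E w y z \<le> path_weight w B"
    using gdist_le_path_weight[OF wg] split(2,3) by auto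
  ultimately show "path_weight w A = gdist V E w x y" and "path_weight w B = gdist V E w y z"
    by linarith+
qed

lemma gdist_add_eq_if_on_shortest_path:
  assumes wg: "weighted_graph V E w" and P: "shortest_path V E w x z P" and "y \<in> set P"
  shows "gdist V E w x y + gdist V E w y z = gdist V E w x z"
proof -
  obtain A B where split: "P = A @ tl B" "path_between V E x y A" "path_between V E y z B"
    using path_between_split assms(3) P by (metis shortest_path_def)
  have "gdist V E w x z = path_weight w A + path_weight w B"
    using P split(1) path_between_append(2)[OF split(2,3)] by (simp add: shortest_path_def)
  then show ?thesis using shortest_path_split_path_weight[OF wg P split] by simp
qed

lemma shortest_path_through_if_gdist_add_eq:
  assumes "weighted_graph V E w" "connected_graph V E" "x \<in> V" "y \<in> V" "z \<in> V"
    and "gdist V E w x y + gdist V E w y z = gdist V E w x z"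
  obtains P where "shortest_path V E w x z P" "y \<in> set P"
proof -
  obtain A B where A: "shortest_path V E w x y A" and B: "shortest_path V E w y z B"
    using shortest_path_exists_if_connected assms(1-5) by metis
  then have AB: "path_between V E x y A" "path_between V E y z B"
    by (simp_all add: shortest_path_def)
  have "shortest_path V E w x z (A @ tl B)"
    using path_between_append[OF AB] A B assms(6) by (simp add: shortest_path_def)
  moreover have "y \<in> set (A @ tl B)"
    using AB(1) by (auto simp: path_between_def is_path_def)
  ultimately show ?thesis by (rule that)
qed

lemma shortest_path_vertex_eq_if_gdist_eq:
  assumes wg: "weighted_graph V E w" and P: "shortest_path V E w x z P"
    and "y \<in> set P" "y' \<in> set P" "gdist V E w x y = gdist V E w x y'"
  shows "y = y'"
proof -
  have P_path: "path_between V E x z P" using P by (simp add: shortest_path_def)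
  obtain A B where A: "P = A @ tl B" "path_between V E x y A" "path_between V E y z B"
    using path_between_split[OF P_path assms(3)] by blast
  obtain A' B' where A': "P = A' @ tl B'" "path_between V E x y' A'" "path_between V E y' z B'"
    using path_between_split[OF P_path assms(4)] by blast
  have "A = A'"
  proof (rule path_prefix_eq_if_path_weight_eq[OF wg _ A(1) A'(1)])
    show "is_path V E P" using P_path by (simp add: path_between_def)
    show "A \<noteq> []" "A' \<noteq> []" using A(2) A'(2) by (auto simp: path_between_def is_path_def)
    show "path_weight w A = path_weight w A'"
      using shortest_path_split_path_weight(1)[OF wg P A] shortest_path_split_path_weight(1)[OF wg P A']
        assms(5) by simp
  qed
  then show ?thesis using A(2) A'(2) by (simp add: path_between_def)
qed

lemma gdist_le_if_on_all_shortest_paths: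
  assumes wg: "weighted_graph V E w" and conn: "connected_graph V E"
    and V: "o1 \<in> V" "o2 \<in> V" "x \<in> V" "y \<in> V"
    and on_all: "\<forall>P. shortest_path V E w o1 o2 P \<longrightarrow> x \<in> set P"
    and diff: "gdist V E w x o1 - gdist V E w x o2 = gdist V E w y o1 - gdist V E w y o2"
  shows "gdist V E w x o1 \<le> gdist V E w y o1"
    and "gdist V E w x o1 = gdist V E w y o1 \<Longrightarrow> x = y"
proof -
  let ?d = "gdist V E w"
  have commute: "?d a b = ?d b a" for a b using gdist_commute[OF wg] .
  obtain P where "shortest_path V E w o1 o2 P"
    using shortest_path_exists_if_connected[OF wg conn V(1,2)] .
  with on_all have x_between: "?d x o1 + ?d x o2 = ?d o1 o2"
    using gdist_add_eq_if_on_shortest_path[OF wg] commute[of o1 x] by force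
  have y_triangle: "?d o1 o2 \<le> ?d y o1 + ?d y o2"
    using gdist_triangle[OF wg conn V(1,4,2)] commute[of o1 y] by simp
  from x_between y_triangle diff show "?d x o1 \<le> ?d y o1" by linarith
  assume eq: "?d x o1 = ?d y o1"
  with x_between diff have "?d o1 y + ?d y o2 = ?d o1 o2"
    using commute[of o1 y] by linarith
  then obtain Q where "shortest_path V E w o1 o2 Q" "y \<in> set Q"
    using shortest_path_through_if_gdist_add_eq[OF wg conn V(1,4,2)] by blast
  moreover have "?d o1 x = ?d o1 y" using eq commute by metis
  ultimately show "x = y"
    using on_all shortest_path_vertex_eq_if_gdist_eq[OF wg] by blast
qed

theorem lemma2:
  fixes V :: "'a set" and E :: "'a \<Rightarrow> 'a \<Rightarrow> bool" and w :: "'a \<Rightarrow> 'a \<Rightarrow> real" and Obs :: "'a set"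
  assumes "weighted_graph V E w"
    and "connected_graph V E"
    and "Obs \<subseteq> V"
    and "\<forall>u\<in>V. \<exists>o1\<in>Obs. \<exists>o2\<in>Obs. (\<exists>!p. shortest_path V E w o1 o2 p) \<and>
            (\<forall>p. shortest_path V E w o1 o2 p \<longrightarrow> u \<in> set p)"
  shows "double_resolving_set V E w Obs"
  unfolding double_resolving_set_def
proof (intro conjI ballI impI)
  show "Obs \<subseteq> V" by fact
  fix x y assume x: "x \<in> V" and y: "y \<in> V" and "x \<noteq> y"
  let ?d = "gdist V E w"
  show "\<exists>u\<in>Obs. \<exists>v\<in>Obs. ?d x u - ?d x v \<noteq> ?d y u - ?d y v"
  proof (rule ccontr)
    assume "\<not> ?thesis"
    then have same: "?d x u - ?d x v = ?d y u - ?d y v" if "u \<in> Obs" "v \<in> Obs" for u v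
      using that by blast
    obtain o1 o2 where o: "o1 \<in> Obs" "o2 \<in> Obs" "\<forall>p. shortest_path V E w o1 o2 p \<longrightarrow> x \<in> set p"
      using assms(4) x by blast
    obtain q1 q2 where q: "q1 \<in> Obs" "q2 \<in> Obs" "\<forall>p. shortest_path V E w q1 q2 p \<longrightarrow> y \<in> set p"
      using assms(4) y by blast
    note observer = gdist_le_if_on_all_shortest_paths[OF assms(1,2)]
    have "?d x o1 \<le> ?d y o1"
      using observer(1)[OF _ _ x y o(3)] o(1,2) assms(3) same by blast
    moreover have "?d y q1 \<le> ?d x q1"
      using observer(1)[OF _ _ y x q(3)] q(1,2) assms(3) same by force
    moreover have "?d x o1 - ?d x q1 = ?d y o1 - ?d y q1" using same o(1) q(1) .
    ultimately have "?d x o1 = ?d y o1" by linarith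
    then have "x = y" using observer(2)[OF _ _ x y o(3)] o(1,2) assms(3) same by blast
    with \<open>x \<noteq> y\<close> show False ..
  qed
qed

end
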